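(* Consider a synchronous fully connected network with a source node $0$ and peers $1,\dots,n-1$, with private authenticated point-to-point links, in which up to $t$ nodes (possibly including the source), $t<n/3$, $t\ge 1$, may be faulty and behave arbitrarily. Fix $c$ large enough and fixed publicly known coefficients defining $2(n-1)$ linear maps $y_1,\dots,y_{2(n-1)}:\mathrm{GF}(2^c)^{n-t}\to \mathrm{GF}(2^c)$ such that any $n-t$ of them are linearly independent. Run the following protocol: (Round 1) the source, holding data vector $\tilde x=(x_1,\dots,x_{n-t})\in \mathrm{GF}(2^c)^{n-t}$, sends to each peer $i$ the two packets $y_i(\tilde x)$ and $y_{n-1+i}(\tilde x)$; (Round 2) each peer $i$ sends the packet $y_i$ it received from the source to every other peer. Each fault-free peer, having received its two packets from the source and one packet (claimed to be $y_j$) from each other peer $j$, computes, for every subset of $n-t$ of these $n$ received packets, the solution $\tilde x'$ of the corresponding linear system; it is said to detect misbehavior if these solutions are not all equal (or some system has no solution), and otherwise it decides on the common solution. Then, whatever the faulty nodes do, either at least one fault-free peer detects misbehavior, or all fault-free peers decide on the same vector, and if the source is fault-free this vector equals the source's data vector $\tilde x$.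
   Context: A faulty source may send packets to the peers that are not all values of the maps $y_i$ at a single vector; a faulty peer may forward arbitrary (tampered) packets to other peers. Fault-free nodes follow the protocol exactly. *)

theory Defs
  imports Main
begin

text \<open>Data vectors in GF(2^c)^m are represented as functions nat => 'a that
vanish outside the index range {0..<m}.\<close>

definition vecs :: "nat \<Rightarrow> (nat \<Rightarrow> 'a::zero) set" where
  "vecs m = {x. \<forall>j\<ge>m. x j = 0}"

definition ymap :: "(nat \<Rightarrow> nat \<Rightarrow> 'a::comm_ring_1) \<Rightarrow> nat \<Rightarrow> nat \<Rightarrow> (nat \<Rightarrow> 'a) \<Rightarrow> 'a" where
  "ymap coef m k x = (\<Sum>j<m. coef k j * x j)"

definition maps_lin_indep :: "(nat \<Rightarrow> nat \<Rightarrow> 'a::field) \<Rightarrow> nat \<Rightarrow> nat set \<Rightarrow> bool" where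
  "maps_lin_indep coef m S =
     (\<forall>a. (\<forall>x \<in> vecs m. (\<Sum>k\<in>S. a k * ymap coef m k x) = 0) \<longrightarrow> (\<forall>k\<in>S. a k = 0))"

text \<open>Index set of the n packets received by peer i: y_1..y_{n-1} (y_i from the source,
the others from the peers) and y_{n-1+i} from the source.\<close>

definition recv_idx :: "nat \<Rightarrow> nat \<Rightarrow> nat set" where
  "recv_idx n i = {1..n-1} \<union> {n - 1 + i}"

text \<open>The packet value peer i holds for index k: s1 i, s2 i are the two packets received from
the source (claimed y_i and y_{n-1+i}); r i j is the packet received by i from peer j.\<close>

definition recv_pkt :: "nat \<Rightarrow> (nat \<Rightarrow> 'a) \<Rightarrow> (nat \<Rightarrow> 'a) \<Rightarrow> (nat \<Rightarrow> nat \<Rightarrow> 'a) \<Rightarrow> nat \<Rightarrow> nat \<Rightarrow> 'a" where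
  "recv_pkt n s1 s2 r i k = (if k = i then s1 i else if k = n - 1 + i then s2 i else r i k)"

definition solutions :: "(nat \<Rightarrow> nat \<Rightarrow> 'a::comm_ring_1) \<Rightarrow> nat \<Rightarrow> nat set \<Rightarrow> (nat \<Rightarrow> 'a) \<Rightarrow> (nat \<Rightarrow> 'a) set" where
  "solutions coef m S p = {x \<in> vecs m. \<forall>k\<in>S. ymap coef m k x = p k}"

definition decides :: "(nat \<Rightarrow> nat \<Rightarrow> 'a::comm_ring_1) \<Rightarrow> nat \<Rightarrow> nat \<Rightarrow> (nat \<Rightarrow> 'a) \<Rightarrow> (nat \<Rightarrow> 'a)
    \<Rightarrow> (nat \<Rightarrow> nat \<Rightarrow> 'a) \<Rightarrow> nat \<Rightarrow> (nat \<Rightarrow> 'a) \<Rightarrow> bool" where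
  "decides coef n t s1 s2 r i v =
     (\<forall>S. S \<subseteq> recv_idx n i \<and> card S = n - t \<longrightarrow>
          solutions coef (n - t) S (recv_pkt n s1 s2 r i) = {v})"

text \<open>Peer i detects misbehavior: the solutions are not all equal, or some system has no
(unique) solution, i.e. there is no common solution to decide on.\<close>

definition detects :: "(nat \<Rightarrow> nat \<Rightarrow> 'a::comm_ring_1) \<Rightarrow> nat \<Rightarrow> nat \<Rightarrow> (nat \<Rightarrow> 'a) \<Rightarrow> (nat \<Rightarrow> 'a)
    \<Rightarrow> (nat \<Rightarrow> nat \<Rightarrow> 'a) \<Rightarrow> nat \<Rightarrow> bool" where
  "detects coef n t s1 s2 r i = (\<not> (\<exists>v. decides coef n t s1 s2 r i v))"

end

theory Submission
  imports Defs
begin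

text \<open>Fault-free peers forward the packet they got from the
source unchanged, so any two fault-free peers share the packets of all fault-free peers. If the
source is faulty, at least \<open>n - t\<close> peers are fault-free, so two deciding peers share a whole
system and decide alike. If the source is fault-free, a fault-free peer holds at least \<open>n - t\<close>
correct packets (those of the fault-free peers and its own second packet from the source), so the
source's vector solves one of its systems and is the decided value.\<close>

lemma solutions_cong:
  assumes "\<forall>k\<in>S. p k = q k"
  shows "solutions coef m S p = solutions coef m S q"
  using assms unfolding solutions_def by auto

lemma decides_solutions_eq:
  assumes "decides coef n t s1 s2 r i v" "S \<subseteq> recv_idx n i" "card S = n - t"
  shows "solutions coef (n - t) S (recv_pkt n s1 s2 r i) = {v}"
  using assms unfolding decides_def by blast

lemma decides_agree_on_common_packets:
  assumes v: "decides coef n t s1 s2 r i v" and w: "decides coef n t s1 s2 r j w"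
    and S: "S \<subseteq> recv_idx n i" "S \<subseteq> recv_idx n j" "n - t \<le> card S"
    and common: "\<forall>k\<in>S. recv_pkt n s1 s2 r i k = recv_pkt n s1 s2 r j k"
  shows "v = w"
proof -
  obtain T where T: "T \<subseteq> S" "card T = n - t"
    using obtain_subset_with_card_n[OF S(3)] by blast
  have "{v} = solutions coef (n - t) T (recv_pkt n s1 s2 r i)"
    using decides_solutions_eq[OF v] S T by auto
  also have "\<dots> = solutions coef (n - t) T (recv_pkt n s1 s2 r j)"
    using common T(1) by (intro solutions_cong) auto
  also have "\<dots> = {w}"
    using decides_solutions_eq[OF w] S T by auto
  finally show ?thesis by simp
qed

lemma decides_eq_of_consistent_packets:
  assumes v: "decides coef n t s1 s2 r i v"
    and S: "S \<subseteq> recv_idx n i" "n - t \<le> card S"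
    and x: "x \<in> vecs (n - t)" "\<forall>k\<in>S. recv_pkt n s1 s2 r i k = ymap coef (n - t) k x"
  shows "v = x"
proof -
  obtain T where T: "T \<subseteq> S" "card T = n - t"
    using obtain_subset_with_card_n[OF S(2)] by blast
  have "x \<in> solutions coef (n - t) T (recv_pkt n s1 s2 r i)"
    using x T(1) unfolding solutions_def by auto
  also have "\<dots> = {v}"
    using decides_solutions_eq[OF v] S T by auto
  finally show ?thesis by simp
qed

lemma card_peers_Diff:
  assumes "F \<subseteq> {0..<n}"
  shows "card ({1..<n} - F) = n - 1 - card (F - {0})"
proof -
  have "F - {0} \<subseteq> {1..<n}" using assms by auto
  moreover have "{1..<n} - F = {1..<n} - (F - {0})" by auto
  ultimately show ?thesis
    by (metis card_Diff_subset card_atLeastLessThan finite_atLeastLessThan finite_subset)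
qed

lemma recv_pkt_from_fault_free_peer:
  assumes peers_ok: "\<forall>j\<in>{1..<n} - F. \<forall>i\<in>{1..<n}. i \<noteq> j \<longrightarrow> r i j = s1 j"
    and "i \<in> {1..<n}" "k \<in> {1..<n} - F"
  shows "recv_pkt n s1 s2 r i k = s1 k"
  using assms unfolding recv_pkt_def by auto

lemma fault_free_peers_agree:
  assumes peers_ok: "\<forall>j\<in>{1..<n} - F. \<forall>i\<in>{1..<n}. i \<noteq> j \<longrightarrow> r i j = s1 j"
    and F: "F \<subseteq> {0..<n}" "card F \<le> t" "0 \<in> F"
    and i: "i \<in> {1..<n} - F" and j: "j \<in> {1..<n} - F"
    and v: "decides coef n t s1 s2 r i v" and w: "decides coef n t s1 s2 r j w"
  shows "v = w"
proof (rule decides_agree_on_common_packets[OF v w])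
  have "finite F"
    using F(1) finite_subset by blast
  then have "card (F - {0}) = card F - 1" "1 \<le> card F"
    using F(3) by (auto simp: Suc_le_eq card_gt_0_iff)
  then show "n - t \<le> card ({1..<n} - F)"
    using card_peers_Diff[OF F(1)] F(2) by linarith
  show "{1..<n} - F \<subseteq> recv_idx n i" "{1..<n} - F \<subseteq> recv_idx n j"
    unfolding recv_idx_def by auto
  show "\<forall>k\<in>{1..<n} - F. recv_pkt n s1 s2 r i k = recv_pkt n s1 s2 r j k"
    using recv_pkt_from_fault_free_peer[OF peers_ok] i j by auto
qed

lemma fault_free_peer_decides_source_value:
  assumes peers_ok: "\<forall>j\<in>{1..<n} - F. \<forall>i\<in>{1..<n}. i \<noteq> j \<longrightarrow> r i j = s1 j"
    and F: "F \<subseteq> {0..<n}" "card F \<le> t" "0 \<notin> F"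
    and source_ok: "\<forall>i\<in>{1..<n}. s1 i = ymap coef (n - t) i x \<and> s2 i = ymap coef (n - t) (n - 1 + i) x"
    and x: "x \<in> vecs (n - t)"
    and i: "i \<in> {1..<n} - F" and v: "decides coef n t s1 s2 r i v"
  shows "v = x"
proof (rule decides_eq_of_consistent_packets[OF v _ _ x])
  let ?S = "insert (n - 1 + i) ({1..<n} - F)"
  show "?S \<subseteq> recv_idx n i"
    unfolding recv_idx_def by auto
  have "F \<subseteq> {1..<n}"
    using F by (auto simp: subset_eq Suc_le_eq intro: gr0I)
  then have "card F \<le> n - 1"
    using card_mono[of "{1..<n}" F] by simp
  moreover have "card ?S = card ({1..<n} - F) + 1"
    using i by (subst card_insert_disjoint) auto
  moreover have "card ({1..<n} - F) = n - 1 - card F"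
    using card_peers_Diff[OF F(1)] F(3) by (metis Diff_empty Diff_insert0)
  ultimately show "n - t \<le> card ?S"
    using F(2) by linarith
  show "\<forall>k\<in>?S. recv_pkt n s1 s2 r i k = ymap coef (n - t) k x"
    using source_ok recv_pkt_from_fault_free_peer[OF peers_ok] i
    unfolding recv_pkt_def by auto
qed

theorem theorem1:
  fixes coef :: "nat \<Rightarrow> nat \<Rightarrow> 'a::{field,finite}"
    and n t c :: nat
    and F :: "nat set"
    and x :: "nat \<Rightarrow> 'a"
    and s1 s2 :: "nat \<Rightarrow> 'a"
    and r :: "nat \<Rightarrow> nat \<Rightarrow> 'a"
  assumes field_card: "card (UNIV :: 'a set) = 2 ^ c"
    and t_pos: "1 \<le> t"
    and t_bound: "3 * t < n"
    and F_nodes: "F \<subseteq> {0..<n}"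
    and F_card: "card F \<le> t"
    and indep: "\<forall>S. S \<subseteq> {1..2 * (n - 1)} \<and> card S = n - t \<longrightarrow> maps_lin_indep coef (n - t) S"
    and x_vec: "x \<in> vecs (n - t)"
    and source_ok: "0 \<notin> F \<longrightarrow>
          (\<forall>i\<in>{1..<n}. s1 i = ymap coef (n - t) i x \<and> s2 i = ymap coef (n - t) (n - 1 + i) x)"
    and peers_ok: "\<forall>j\<in>{1..<n} - F. \<forall>i\<in>{1..<n}. i \<noteq> j \<longrightarrow> r i j = s1 j"
  shows "(\<exists>i\<in>{1..<n} - F. detects coef n t s1 s2 r i)
       \<or> (\<exists>v. (\<forall>i\<in>{1..<n} - F. decides coef n t s1 s2 r i v) \<and> (0 \<notin> F \<longrightarrow> v = x))"
proof (cases "\<exists>i\<in>{1..<n} - F. detects coef n t s1 s2 r i")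
  case False
  then have decided: "\<exists>v. decides coef n t s1 s2 r i v" if "i \<in> {1..<n} - F" for i
    using that unfolding detects_def by blast
  have "\<exists>v. (\<forall>i\<in>{1..<n} - F. decides coef n t s1 s2 r i v) \<and> (0 \<notin> F \<longrightarrow> v = x)"
  proof (cases "0 \<in> F")
    case True
    show ?thesis
    proof (cases "{1..<n} - F = {}")
      case False
      then obtain i0 v where "i0 \<in> {1..<n} - F" "decides coef n t s1 s2 r i0 v"
        using decided by blast
      then show ?thesis
        using decided fault_free_peers_agree[OF peers_ok F_nodes F_card True] True by metis
    qed (use True in auto)
  next
    case False
    then show ?thesis
      using decided fault_free_peer_decides_source_value[OF peers_ok F_nodes F_card False]
        source_ok x_vec by metis
  qed
  then show ?thesis ..
qed blast

end
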